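(* Let $A\in\mathbf{R}^{n\times n}$, $C_i\in\mathbf{R}^{m_i\times n}$ ($i=1,\ldots,N$), $H\in\mathbf{R}^{p\times n}$, and let $\mathcal{L}$ be the Laplacian of a directed graph $\mathbf{G}$ on $N$ nodes. Set $\bar A=I_N\otimes A$, $\bar C=\mathrm{diag}[C_1,\ldots,C_N]$, $\bar H=\mathcal{L}\otimes H$. Suppose the pair $\left(\begin{bmatrix}\bar C\\ \bar H\end{bmatrix},\bar A\right)$ is detectable. Then for every reach $\mathbf{R}_s$ of $\mathbf{G}$: (i) $\bigcap_{i\in\mathbf{R}_s}\mathcal{C}_i=\{0\}$; (ii) $\mathcal{O}_H\cap\mathcal{C}_i=\{0\}$ for all $i\in\mathbf{R}_s$. Here $\mathcal{C}_i$ is the undetectable subspace of $(C_i,A)$ and $\mathcal{O}_H=\bigcap_{l=1}^n\operatorname{Ker}(HA^{l-1})$.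
   Context: Directed graph $\mathbf{G}$ on $\{1,\ldots,N\}$ without self-loops; adjacency matrix $\mathbf{A}=[\mathbf{a}_{ij}]$ with $\mathbf{a}_{ij}=1$ if there is an edge from $j$ to $i$, else $0$; $p_i$ the in-degree of node $i$; Laplacian $\mathcal{L}=\mathrm{diag}[p_1,\ldots,p_N]-\mathbf{A}$. For a vertex $j$, the reachable subgraph $\mathbf{R}(j)$ is the set consisting of $j$ and all nodes reachable from $j$ by a directed path. A reach is a maximal reachable subgraph: $\mathbf{R}=\mathbf{R}(i)$ for some $i$ such that there is no $j\ne i$ with $\mathbf{R}(i)\subsetneq\mathbf{R}(j)$. For a square matrix $F$ with minimal polynomial $\alpha_F=\alpha_F^-\alpha_F^+$ (zeros of $\alpha_F^-$ in the open left half-plane, of $\alpha_F^+$ in the closed right half-plane), the undetectable subspace of $(G,F)$ is $\bigcap_{l=1}^n\operatorname{Ker}(GF^{l-1})\cap\operatorname{Ker}\alpha_F^+(F)$; the pair is detectable iff this subspace is $\{0\}$. *)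

theory Defs
  imports "Jordan_Normal_Form.Matrix" "HOL-Computational_Algebra.Polynomial" Complex_Main
begin

text \<open>Evaluation of a polynomial at a square matrix (Horner scheme):
  for coefficients a0, a1, ..., ak this is a0 I + F (a1 I + F (... )) = sum_i a_i F^i.\<close>
definition mat_poly_eval :: "'a :: comm_ring_1 poly \<Rightarrow> 'a mat \<Rightarrow> 'a mat" where
  "mat_poly_eval q F =
     foldr (\<lambda>c M. c \<cdot>\<^sub>m 1\<^sub>m (dim_row F) + F * M) (coeffs q) (0\<^sub>m (dim_row F) (dim_row F))"

definition min_poly :: "real mat \<Rightarrow> real poly" where
  "min_poly F = (THE q. lead_coeff q = 1 \<and> mat_poly_eval q F = 0\<^sub>m (dim_row F) (dim_row F) \<and>
      (\<forall>r. r \<noteq> 0 \<and> mat_poly_eval r F = 0\<^sub>m (dim_row F) (dim_row F) \<longrightarrow> degree q \<le> degree r))"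

definition alpha_plus :: "real mat \<Rightarrow> complex poly" where
  "alpha_plus F = (let q = map_poly complex_of_real (min_poly F) in
     \<Prod>z\<in>{z. poly q z = 0 \<and> Re z \<ge> 0}. [:- z, 1:] ^ order z q)"

definition undetectable_subspace :: "real mat \<Rightarrow> real mat \<Rightarrow> real vec set" where
  "undetectable_subspace G F =
     {x \<in> carrier_vec (dim_row F).
        (\<forall>l\<in>{1..dim_row F}. (G * F ^\<^sub>m (l - 1)) *\<^sub>v x = 0\<^sub>v (dim_row G)) \<and>
        mat_poly_eval (alpha_plus F) (map_mat complex_of_real F) *\<^sub>v map_vec complex_of_real x
          = 0\<^sub>v (dim_row F)}"

definition detectable :: "real mat \<Rightarrow> real mat \<Rightarrow> bool" where
  "detectable G F \<longleftrightarrow> undetectable_subspace G F = {0\<^sub>v (dim_row F)}"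

definition unobs_subspace :: "real mat \<Rightarrow> real mat \<Rightarrow> real vec set" where
  "unobs_subspace H A =
     {x \<in> carrier_vec (dim_row A). \<forall>l\<in>{1..dim_row A}. (H * A ^\<^sub>m (l - 1)) *\<^sub>v x = 0\<^sub>v (dim_row H)}"

definition kron_mat :: "'a :: times mat \<Rightarrow> 'a mat \<Rightarrow> 'a mat" where
  "kron_mat X Y = mat (dim_row X * dim_row Y) (dim_col X * dim_col Y)
     (\<lambda>(i, j). X $$ (i div dim_row Y, j div dim_col Y) * Y $$ (i mod dim_row Y, j mod dim_col Y))"

text \<open>Directed graph on nodes {0..<N} given by an edge set E; (j, i) \<in> E means an edge
  from j to i (so a_ij = 1 iff (j,i) \<in> E).\<close>

definition in_degree :: "(nat \<times> nat) set \<Rightarrow> nat \<Rightarrow> nat" where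
  "in_degree E i = card {j. (j, i) \<in> E}"

definition laplacian :: "nat \<Rightarrow> (nat \<times> nat) set \<Rightarrow> real mat" where
  "laplacian N E = mat N N (\<lambda>(i, j).
      (if i = j then real (in_degree E i) else 0) - (if (j, i) \<in> E then 1 else 0))"

definition reachable_set :: "(nat \<times> nat) set \<Rightarrow> nat \<Rightarrow> nat set" where
  "reachable_set E j = {k. (j, k) \<in> E\<^sup>*}"

definition is_reach :: "nat \<Rightarrow> (nat \<times> nat) set \<Rightarrow> nat set \<Rightarrow> bool" where
  "is_reach N E R \<longleftrightarrow> (\<exists>i<N. R = reachable_set E i \<and>
      \<not> (\<exists>j<N. j \<noteq> i \<and> reachable_set E i \<subset> reachable_set E j))"

end

theory Submission
  imports Defs "Jordan_Normal_Form.Determinant"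
begin

text \<open>If x \<noteq> 0 is undetectable for every C_i with v_i \<noteq> 0, where v is a kernel vector of \<L>,
  then v \<otimes> x is undetectable for the networked pair: I \<otimes> A acts on it as A acts on x, the block
  diag[C_i] annihilates it, and so does \<L> \<otimes> H, which maps it to (\<L> v) \<otimes> (H A^j x). For (i) such a
  v supported on the reach R = R(r) exists: the ancestors of r all lie in R and form a set S closed
  under in-edges, so the rows of \<L> restricted to S sum to zero; a left kernel vector of \<L>_S extends
  by zero to one of \<L>_R, so \<L>_R is singular, and a right kernel vector of \<L>_R extends by zero to
  one of \<L> because no edge leaves R. For (ii) the unit vector e_i works, since then H A^j x = 0.\<close>

subsection \<open>Kronecker products\<close>

lemma mult_add_less_mult: "k < N \<Longrightarrow> c < n \<Longrightarrow> k * n + c < N * (n::nat)"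
proof -
  assume "k < N" "c < n"
  then have "k * n + c < (k + 1) * n" by simp
  also have "\<dots> \<le> N * n" using \<open>k < N\<close> by (intro mult_le_mono1) simp
  finally show ?thesis .
qed

lemma less_mult_div_mod:
  assumes "i < N * (n::nat)"
  shows "i div n < N" "i mod n < n"
  using assms by (cases "n = 0", auto simp: less_mult_imp_div_less)+

lemma nonzero_vec_index:
  "v \<in> carrier_vec N \<Longrightarrow> v \<noteq> 0\<^sub>v N \<Longrightarrow> \<exists>k<N. v $ k \<noteq> 0"
  by (metis carrier_vecD eq_vecI index_zero_vec)

lemma sum_mult_div_mod:
  fixes N n :: nat
  shows "(\<Sum>j\<in>{0..<N * n}. f (j div n) (j mod n)) = (\<Sum>k\<in>{0..<N}. \<Sum>c\<in>{0..<n}. (f k c :: 'a::comm_monoid_add))"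
proof -
  have "(\<Sum>k\<in>{0..<N}. \<Sum>c\<in>{0..<n}. f k c) = (\<Sum>(k, c)\<in>{0..<N} \<times> {0..<n}. f k c)"
    by (rule sum.cartesian_product)
  also have "\<dots> = (\<Sum>j\<in>{0..<N * n}. f (j div n) (j mod n))"
  proof (rule sum.reindex_bij_witness[where i = "\<lambda>j. (j div n, j mod n)" and j = "\<lambda>(k, c). k * n + c"])
    fix j assume "j \<in> {0..<N * n}"
    then show "(j div n, j mod n) \<in> {0..<N} \<times> {0..<n}"
      using less_mult_div_mod[of j N n] by simp
  qed (auto simp: mult_add_less_mult)
  finally show ?thesis by simp
qed

definition kron_vec :: "'a::times vec \<Rightarrow> 'a vec \<Rightarrow> 'a vec" where
  "kron_vec v x = vec (dim_vec v * dim_vec x) (\<lambda>i. v $ (i div dim_vec x) * x $ (i mod dim_vec x))"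

lemma dim_kron_vec [simp]: "dim_vec (kron_vec v x) = dim_vec v * dim_vec x"
  by (simp add: kron_vec_def)

lemma carrier_kron_vec [simp]:
  "v \<in> carrier_vec N \<Longrightarrow> x \<in> carrier_vec n \<Longrightarrow> kron_vec v x \<in> carrier_vec (N * n)"
  by (simp add: kron_vec_def)

lemma index_kron_vec:
  "v \<in> carrier_vec N \<Longrightarrow> x \<in> carrier_vec n \<Longrightarrow> i < N * n \<Longrightarrow>
    kron_vec v x $ i = v $ (i div n) * x $ (i mod n)"
  by (simp add: kron_vec_def)

lemma index_kron_vec_block:
  "v \<in> carrier_vec N \<Longrightarrow> x \<in> carrier_vec n \<Longrightarrow> k < N \<Longrightarrow> c < n \<Longrightarrow>
    kron_vec v x $ (k * n + c) = v $ k * x $ c"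
  by (simp add: index_kron_vec mult_add_less_mult)

lemma kron_vec_eq_zero_iff:
  fixes v x :: "'a::semiring_no_zero_divisors vec"
  assumes v: "v \<in> carrier_vec N" and x: "x \<in> carrier_vec n"
  shows "kron_vec v x = 0\<^sub>v (N * n) \<longleftrightarrow> v = 0\<^sub>v N \<or> x = 0\<^sub>v n"
proof
  assume vx: "kron_vec v x = 0\<^sub>v (N * n)"
  show "v = 0\<^sub>v N \<or> x = 0\<^sub>v n"
  proof (rule ccontr)
    assume "\<not> ?thesis"
    then obtain k c where "k < N" "v $ k \<noteq> 0" "c < n" "x $ c \<noteq> 0"
      using nonzero_vec_index[OF v] nonzero_vec_index[OF x] by blast
    moreover have "kron_vec v x $ (k * n + c) = 0"
      using vx \<open>k < N\<close> \<open>c < n\<close> by (simp add: mult_add_less_mult)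
    ultimately show False
      using index_kron_vec_block[OF v x] by simp
  qed
qed (use v x less_mult_div_mod in \<open>auto intro!: eq_vecI simp: kron_vec_def\<close>)

lemma carrier_kron_mat [simp]:
  "P \<in> carrier_mat a N \<Longrightarrow> Q \<in> carrier_mat b n \<Longrightarrow> kron_mat P Q \<in> carrier_mat (a * b) (N * n)"
  by (simp add: kron_mat_def)

lemma dim_kron_mat [simp]:
  "dim_row (kron_mat P Q) = dim_row P * dim_row Q"
  "dim_col (kron_mat P Q) = dim_col P * dim_col Q"
  by (simp_all add: kron_mat_def)

lemma index_kron_mat:
  "P \<in> carrier_mat a N \<Longrightarrow> Q \<in> carrier_mat b n \<Longrightarrow> i < a * b \<Longrightarrow> j < N * n \<Longrightarrow>
    kron_mat P Q $$ (i, j) = P $$ (i div b, j div n) * Q $$ (i mod b, j mod n)"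
  by (simp add: kron_mat_def)

lemma kron_mat_mult_kron_vec:
  fixes P Q :: "'a::comm_semiring_1 mat"
  assumes P: "P \<in> carrier_mat a N" and Q: "Q \<in> carrier_mat b n"
    and v: "v \<in> carrier_vec N" and x: "x \<in> carrier_vec n"
  shows "kron_mat P Q *\<^sub>v kron_vec v x = kron_vec (P *\<^sub>v v) (Q *\<^sub>v x)"
proof (rule eq_vecI)
  fix i assume "i < dim_vec (kron_vec (P *\<^sub>v v) (Q *\<^sub>v x))"
  then have i: "i < a * b" using P Q by simp
  note ib = less_mult_div_mod[OF i]
  have "(kron_mat P Q *\<^sub>v kron_vec v x) $ i
      = (\<Sum>j\<in>{0..<N * n}. kron_mat P Q $$ (i, j) * kron_vec v x $ j)"
    using i P Q v x by (simp add: scalar_prod_def)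
  also have "\<dots> = (\<Sum>j\<in>{0..<N * n}. (\<lambda>k c. P $$ (i div b, k) * Q $$ (i mod b, c) * (v $ k * x $ c))
      (j div n) (j mod n))"
    using P Q v x i by (intro sum.cong) (auto simp: index_kron_mat index_kron_vec)
  also have "\<dots> = (\<Sum>k\<in>{0..<N}. \<Sum>c\<in>{0..<n}. P $$ (i div b, k) * Q $$ (i mod b, c) * (v $ k * x $ c))"
    by (rule sum_mult_div_mod)
  also have "\<dots> = (\<Sum>k\<in>{0..<N}. P $$ (i div b, k) * v $ k) * (\<Sum>c\<in>{0..<n}. Q $$ (i mod b, c) * x $ c)"
    by (simp add: sum_product ac_simps)
  also have "\<dots> = kron_vec (P *\<^sub>v v) (Q *\<^sub>v x) $ i"
    using P Q v x i ib by (subst index_kron_vec[of _ a _ b]) (auto simp: scalar_prod_def)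
  finally show "(kron_mat P Q *\<^sub>v kron_vec v x) $ i = kron_vec (P *\<^sub>v v) (Q *\<^sub>v x) $ i" .
qed (use P Q in simp)

lemma kron_mat_mult:
  fixes P Q R S :: "'a::comm_semiring_1 mat"
  assumes P: "P \<in> carrier_mat a N" and Q: "Q \<in> carrier_mat b n"
    and R: "R \<in> carrier_mat N c" and S: "S \<in> carrier_mat n d"
  shows "kron_mat P Q * kron_mat R S = kron_mat (P * R) (Q * S)"
proof (rule eq_matI)
  fix i j assume "i < dim_row (kron_mat (P * R) (Q * S))" "j < dim_col (kron_mat (P * R) (Q * S))"
  then have i: "i < a * b" and j: "j < c * d" using P Q R S by auto
  note ij = less_mult_div_mod[OF i] less_mult_div_mod[OF j]
  have "(kron_mat P Q * kron_mat R S) $$ (i, j)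
      = (\<Sum>t\<in>{0..<N * n}. kron_mat P Q $$ (i, t) * kron_mat R S $$ (t, j))"
    using i j P Q R S by (simp add: scalar_prod_def)
  also have "\<dots> = (\<Sum>t\<in>{0..<N * n}. (\<lambda>k e. P $$ (i div b, k) * Q $$ (i mod b, e)
      * (R $$ (k, j div d) * S $$ (e, j mod d))) (t div n) (t mod n))"
    using P Q R S i j by (intro sum.cong) (auto simp: index_kron_mat)
  also have "\<dots> = (\<Sum>k\<in>{0..<N}. \<Sum>e\<in>{0..<n}. P $$ (i div b, k) * Q $$ (i mod b, e)
      * (R $$ (k, j div d) * S $$ (e, j mod d)))"
    by (rule sum_mult_div_mod)
  also have "\<dots> = (\<Sum>k\<in>{0..<N}. P $$ (i div b, k) * R $$ (k, j div d))
      * (\<Sum>e\<in>{0..<n}. Q $$ (i mod b, e) * S $$ (e, j mod d))"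
    by (simp add: sum_product ac_simps)
  also have "\<dots> = kron_mat (P * R) (Q * S) $$ (i, j)"
    using P Q R S i j ij
    by (simp add: index_kron_mat[OF mult_carrier_mat[OF P R] mult_carrier_mat[OF Q S]] scalar_prod_def)
  finally show "(kron_mat P Q * kron_mat R S) $$ (i, j) = kron_mat (P * R) (Q * S) $$ (i, j)" .
qed (use P Q R S in simp_all)

lemma kron_mat_add_right:
  fixes P X Y :: "'a::semiring_0 mat"
  assumes P: "P \<in> carrier_mat a N" and X: "X \<in> carrier_mat b n" and Y: "Y \<in> carrier_mat b n"
  shows "kron_mat P (X + Y) = kron_mat P X + kron_mat P Y"
proof (rule eq_matI)
  fix i j assume "i < dim_row (kron_mat P X + kron_mat P Y)" "j < dim_col (kron_mat P X + kron_mat P Y)"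
  then have "i < a * b" "j < N * n" using P Y by simp_all
  then show "kron_mat P (X + Y) $$ (i, j) = (kron_mat P X + kron_mat P Y) $$ (i, j)"
    using P X Y less_mult_div_mod[of i a b] less_mult_div_mod[of j N n]
    by (simp add: index_kron_mat index_kron_mat[OF P add_carrier_mat[OF Y]] distrib_left)
qed (use P X Y in simp_all)

lemma kron_mat_smult_right:
  fixes P Q :: "'a::comm_semiring_0 mat"
  assumes P: "P \<in> carrier_mat a N" and Q: "Q \<in> carrier_mat b n"
  shows "kron_mat P (c \<cdot>\<^sub>m Q) = c \<cdot>\<^sub>m kron_mat P Q"
proof (rule eq_matI)
  fix i j assume "i < dim_row (c \<cdot>\<^sub>m kron_mat P Q)" "j < dim_col (c \<cdot>\<^sub>m kron_mat P Q)"
  then have "i < a * b" "j < N * n" using P Q by simp_all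
  then show "kron_mat P (c \<cdot>\<^sub>m Q) $$ (i, j) = (c \<cdot>\<^sub>m kron_mat P Q) $$ (i, j)"
    using P Q less_mult_div_mod[of i a b] less_mult_div_mod[of j N n]
    by (simp add: index_kron_mat index_kron_mat[OF P smult_carrier_mat[OF Q]] ac_simps)
qed (use P Q in simp_all)

lemma kron_mat_zero_right:
  assumes P: "P \<in> carrier_mat a N"
  shows "kron_mat P (0\<^sub>m b n) = (0\<^sub>m (a * b) (N * n) :: 'a::semiring_0 mat)"
proof (rule eq_matI)
  fix i j assume "i < dim_row (0\<^sub>m (a * b) (N * n) :: 'a mat)" "j < dim_col (0\<^sub>m (a * b) (N * n) :: 'a mat)"
  then have "i < a * b" "j < N * n" by simp_all
  then show "kron_mat P (0\<^sub>m b n) $$ (i, j) = (0\<^sub>m (a * b) (N * n) :: 'a mat) $$ (i, j)"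
    using P less_mult_div_mod[of i a b] less_mult_div_mod[of j N n]
    by (simp add: index_kron_mat[OF P zero_carrier_mat])
qed (use P in simp_all)

lemma kron_mat_one: "kron_mat (1\<^sub>m N) (1\<^sub>m n) = (1\<^sub>m (N * n) :: 'a::semiring_1 mat)"
proof (rule eq_matI)
  fix i j assume "i < dim_row (1\<^sub>m (N * n) :: 'a mat)" "j < dim_col (1\<^sub>m (N * n) :: 'a mat)"
  then have ij: "i < N * n" "j < N * n" by simp_all
  have "i = j \<longleftrightarrow> i div n = j div n \<and> i mod n = j mod n"
    by (metis div_mult_mod_eq)
  then show "kron_mat (1\<^sub>m N) (1\<^sub>m n) $$ (i, j) = (1\<^sub>m (N * n) :: 'a mat) $$ (i, j)"
    using ij less_mult_div_mod[OF ij(1)] less_mult_div_mod[OF ij(2)]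
    by (simp add: index_kron_mat[OF one_carrier_mat one_carrier_mat])
qed simp_all

lemma kron_mat_one_eq_zero_iff:
  fixes X :: "'a::semiring_1 mat"
  assumes X: "X \<in> carrier_mat b n" and N: "N > 0"
  shows "kron_mat (1\<^sub>m N) X = 0\<^sub>m (N * b) (N * n) \<longleftrightarrow> X = 0\<^sub>m b n"
proof
  assume K: "kron_mat (1\<^sub>m N) X = 0\<^sub>m (N * b) (N * n)"
  show "X = 0\<^sub>m b n"
  proof (rule eq_matI)
    fix i j assume "i < dim_row (0\<^sub>m b n :: 'a mat)" "j < dim_col (0\<^sub>m b n :: 'a mat)"
    then have ij: "i < b" "j < n" by simp_all
    then have ij': "0 * b + i < N * b" "0 * n + j < N * n"
      using N by (simp_all only: mult_add_less_mult)
    then have "kron_mat (1\<^sub>m N) X $$ (i, j) = 0" using K by simp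
    then show "X $$ (i, j) = 0\<^sub>m b n $$ (i, j)"
      using ij ij' N X by (simp add: index_kron_mat[OF one_carrier_mat X])
  qed (use X in simp_all)
qed (use X in \<open>simp add: kron_mat_zero_right\<close>)

lemma map_mat_kron_mat:
  assumes f: "\<And>a b. f (a * b) = f a * f b"
  shows "map_mat f (kron_mat P Q) = kron_mat (map_mat f P) (map_mat f Q)"
proof (rule eq_matI)
  fix i j assume "i < dim_row (kron_mat (map_mat f P) (map_mat f Q))"
    "j < dim_col (kron_mat (map_mat f P) (map_mat f Q))"
  then have "i < dim_row P * dim_row Q" "j < dim_col P * dim_col Q" by simp_all
  then show "map_mat f (kron_mat P Q) $$ (i, j) = kron_mat (map_mat f P) (map_mat f Q) $$ (i, j)"
    using f less_mult_div_mod[of i "dim_row P" "dim_row Q"] less_mult_div_mod[of j "dim_col P" "dim_col Q"]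
    by (simp add: kron_mat_def)
qed simp_all

lemma map_vec_kron_vec:
  assumes f: "\<And>a b. f (a * b) = f a * f b"
  shows "map_vec f (kron_vec v x) = kron_vec (map_vec f v) (map_vec f x)"
proof (rule eq_vecI)
  fix i assume "i < dim_vec (kron_vec (map_vec f v) (map_vec f x))"
  then show "map_vec f (kron_vec v x) $ i = kron_vec (map_vec f v) (map_vec f x) $ i"
    using f less_mult_div_mod[of i "dim_vec v" "dim_vec x"] by (simp add: kron_vec_def)
qed simp

subsection \<open>Polynomials in I \<otimes> A\<close>

lemma carrier_mat_poly_eval: "B \<in> carrier_mat n n \<Longrightarrow> mat_poly_eval q B \<in> carrier_mat n n"
proof -
  assume B: "B \<in> carrier_mat n n"
  have "foldr (\<lambda>c M. c \<cdot>\<^sub>m 1\<^sub>m n + B * M) cs (0\<^sub>m n n) \<in> carrier_mat n n" for cs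
    using B by (induction cs) auto
  then show ?thesis using B by (simp add: mat_poly_eval_def)
qed

lemma mat_poly_eval_kron_one:
  fixes B :: "'a::comm_ring_1 mat"
  assumes B: "B \<in> carrier_mat n n"
  shows "mat_poly_eval q (kron_mat (1\<^sub>m N) B) = kron_mat (1\<^sub>m N) (mat_poly_eval q B)"
proof -
  have "foldr (\<lambda>c M. c \<cdot>\<^sub>m 1\<^sub>m (N * n) + kron_mat (1\<^sub>m N) B * M) cs (0\<^sub>m (N * n) (N * n))
      = kron_mat (1\<^sub>m N) (foldr (\<lambda>c M. c \<cdot>\<^sub>m 1\<^sub>m n + B * M) cs (0\<^sub>m n n))" for cs
  proof (induction cs)
    case Nil
    then show ?case by (simp add: kron_mat_zero_right[OF one_carrier_mat])
  next
    case (Cons c cs)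
    have F: "foldr (\<lambda>c M. c \<cdot>\<^sub>m 1\<^sub>m n + B * M) cs (0\<^sub>m n n) \<in> carrier_mat n n"
      using B by (induction cs) auto
    with Cons B show ?case
      by (simp add: kron_mat_add_right[of _ N N _ n n] kron_mat_smult_right[of _ N N _ n n]
          kron_mat_one kron_mat_mult[OF one_carrier_mat B one_carrier_mat F])
  qed
  then show ?thesis using B by (simp add: mat_poly_eval_def)
qed

lemma min_poly_kron_one:
  assumes A: "A \<in> carrier_mat n n" and N: "N > 0"
  shows "min_poly (kron_mat (1\<^sub>m N) A) = min_poly A"
proof -
  have "mat_poly_eval q (kron_mat (1\<^sub>m N) A) = 0\<^sub>m (N * n) (N * n) \<longleftrightarrow> mat_poly_eval q A = 0\<^sub>m n n" for q
    unfolding mat_poly_eval_kron_one[OF A]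
    by (rule kron_mat_one_eq_zero_iff[OF carrier_mat_poly_eval[OF A] N])
  with A show ?thesis by (simp add: min_poly_def)
qed

lemma alpha_plus_kron_one:
  "A \<in> carrier_mat n n \<Longrightarrow> N > 0 \<Longrightarrow> alpha_plus (kron_mat (1\<^sub>m N) A) = alpha_plus A"
  by (simp add: alpha_plus_def min_poly_kron_one)

subsection \<open>Krylov sequences\<close>

lemma transpose_kernel_nonzero:
  fixes Z :: "'a::idom mat"
  assumes Z: "Z \<in> carrier_mat k k"
    and u: "u \<in> carrier_vec k" "u \<noteq> 0\<^sub>v k" "Z *\<^sub>v u = 0\<^sub>v k"
  obtains w where "w \<in> carrier_vec k" "w \<noteq> 0\<^sub>v k" "transpose_mat Z *\<^sub>v w = 0\<^sub>v k"
proof -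
  have "det (transpose_mat Z) = 0"
    using det_0_iff_vec_prod_zero[OF Z] u det_transpose[OF Z] by auto
  then show ?thesis
    using that det_0_iff_vec_prod_zero[of "transpose_mat Z" k] Z by auto
qed

text \<open>The n + 1 vectors A^l x (l \<le> n) in an n-dimensional space are linearly dependent; the
  dependence is found as a kernel vector of the square matrix with columns A^l x padded by a zero
  row.\<close>
lemma krylov_linear_dependence:
  fixes A :: "'a::idom mat"
  assumes A: "A \<in> carrier_mat n n" and x: "x \<in> carrier_vec n"
  obtains a k where "k \<le> n" "a k \<noteq> 0" "\<And>r. r < n \<Longrightarrow> (\<Sum>l\<in>{0..k}. a l * (A ^\<^sub>m l *\<^sub>v x) $ r) = 0"
proof -
  define Z where "Z = mat (Suc n) (Suc n) (\<lambda>(r, l). if r < n then (A ^\<^sub>m l *\<^sub>v x) $ r else 0)"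
  have Z: "Z \<in> carrier_mat (Suc n) (Suc n)" by (simp add: Z_def)
  have "transpose_mat Z *\<^sub>v unit_vec (Suc n) n = 0\<^sub>v (Suc n)"
    by (intro eq_vecI) (auto simp: Z_def scalar_prod_def intro!: sum.neutral)
  then obtain u where u: "u \<in> carrier_vec (Suc n)" "u \<noteq> 0\<^sub>v (Suc n)" "Z *\<^sub>v u = 0\<^sub>v (Suc n)"
    using transpose_kernel_nonzero[of "transpose_mat Z" "Suc n" "unit_vec (Suc n) n"] Z by auto
  define k where "k = Max {l. l < Suc n \<and> u $ l \<noteq> 0}"
  have "{l. l < Suc n \<and> u $ l \<noteq> 0} \<noteq> {}"
    using u by (auto intro!: eq_vecI)
  then have k: "k \<le> n" "u $ k \<noteq> 0"
    using Max_in[of "{l. l < Suc n \<and> u $ l \<noteq> 0}"] by (auto simp: k_def)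
  have above_k: "u $ l = 0" if "l < Suc n" "k < l" for l
  proof (rule ccontr)
    assume "u $ l \<noteq> 0"
    then have "l \<le> k" using that unfolding k_def by (intro Max_ge) auto
    then show False using that by simp
  qed
  show thesis
  proof (rule that[of k "\<lambda>l. u $ l", OF k])
    fix r assume r: "r < n"
    have "0 = (Z *\<^sub>v u) $ r" using u r by simp
    also have "\<dots> = (\<Sum>l\<in>{0..<Suc n}. u $ l * (A ^\<^sub>m l *\<^sub>v x) $ r)"
      using u(1) r by (simp add: Z_def scalar_prod_def mult.commute)
    also have "\<dots> = (\<Sum>l\<in>{0..k}. u $ l * (A ^\<^sub>m l *\<^sub>v x) $ r)"
      using k above_k by (intro sum.mono_neutral_right) auto
    finally show "(\<Sum>l\<in>{0..k}. u $ l * (A ^\<^sub>m l *\<^sub>v x) $ r) = 0" by simp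
  qed
qed

lemma linear_recurrence_eq_zero:
  fixes s a :: "nat \<Rightarrow> 'a::field"
  assumes rec: "\<And>j. (\<Sum>l\<in>{0..k}. a l * s (j + l)) = 0" and "a k \<noteq> 0"
    and init: "\<And>j. j < k \<Longrightarrow> s j = 0"
  shows "s j = 0"
proof (induction j rule: less_induct)
  case (less j)
  show ?case
  proof (cases "j < k")
    case False
    then obtain i where j: "j = i + k" by (metis add.commute le_Suc_ex not_less)
    have "0 = a k * s (i + k) + (\<Sum>l\<in>{0..<k}. a l * s (i + l))"
      using rec[of i] by (simp add: atLeast0AtMost atLeast0LessThan lessThan_Suc_atMost[symmetric] add.commute)
    also have "(\<Sum>l\<in>{0..<k}. a l * s (i + l)) = 0"
      using less j by (intro sum.neutral) auto
    finally show ?thesis using j \<open>a k \<noteq> 0\<close> by simp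
  qed (rule init)
qed

lemma pow_mat_add: "A \<in> carrier_mat n n \<Longrightarrow> A ^\<^sub>m (j + l) = A ^\<^sub>m j * A ^\<^sub>m l"
  by (induction l) (auto simp: assoc_mult_mat[of _ n n _ n _ n])

text \<open>The undetectable subspace of (C_i, A) only constrains the powers A^l with l < n, whereas
  that of the networked pair involves N n powers of I \<otimes> A.\<close>
lemma mult_pow_mat_vec_eq_zero:
  fixes A M :: "'a::field mat"
  assumes A: "A \<in> carrier_mat n n" and x: "x \<in> carrier_vec n" and M: "M \<in> carrier_mat q n"
    and low: "\<forall>l\<in>{1..n}. (M * A ^\<^sub>m (l - 1)) *\<^sub>v x = 0\<^sub>v q"
  shows "(M * A ^\<^sub>m j) *\<^sub>v x = 0\<^sub>v q"
proof -
  obtain a k where k: "k \<le> n" "a k \<noteq> 0"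
    and dep: "\<And>r. r < n \<Longrightarrow> (\<Sum>l\<in>{0..k}. a l * (A ^\<^sub>m l *\<^sub>v x) $ r) = 0"
    using krylov_linear_dependence[OF A x] by blast
  have "((M * A ^\<^sub>m j) *\<^sub>v x) $ i = 0" if i: "i < q" for i
  proof (rule linear_recurrence_eq_zero[where s = "\<lambda>j. ((M * A ^\<^sub>m j) *\<^sub>v x) $ i"])
    fix j
    define W where "W = M * A ^\<^sub>m j"
    have W: "W \<in> carrier_mat q n" using M A by (simp add: W_def)
    have entry: "((M * A ^\<^sub>m (j + l)) *\<^sub>v x) $ i = (\<Sum>r\<in>{0..<n}. W $$ (i, r) * (A ^\<^sub>m l *\<^sub>v x) $ r)" for l
    proof -
      have "M * A ^\<^sub>m (j + l) = W * A ^\<^sub>m l"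
        using M A by (simp add: W_def pow_mat_add[OF A] assoc_mult_mat[of _ q n _ n _ n])
      then show ?thesis
        using W A x i by (simp add: assoc_mult_mat_vec[of W q n "A ^\<^sub>m l" n x] scalar_prod_def)
    qed
    have "(\<Sum>l\<in>{0..k}. a l * ((M * A ^\<^sub>m (j + l)) *\<^sub>v x) $ i)
        = (\<Sum>r\<in>{0..<n}. W $$ (i, r) * (\<Sum>l\<in>{0..k}. a l * (A ^\<^sub>m l *\<^sub>v x) $ r))"
      unfolding entry by (simp add: sum_distrib_left ac_simps sum.swap[of _ "{0..k}"])
    also have "\<dots> = 0" using dep by simp
    finally show "(\<Sum>l\<in>{0..k}. a l * ((M * A ^\<^sub>m (j + l)) *\<^sub>v x) $ i) = 0" .
  next
    fix j assume "j < k"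
    then have "Suc j \<in> {1..n}" using k by simp
    then show "((M * A ^\<^sub>m j) *\<^sub>v x) $ i = 0" using low i by fastforce
  qed (use k in simp)
  then show ?thesis using M A x by (intro eq_vecI) auto
qed

lemma undetectable_subspaceD:
  assumes "x \<in> undetectable_subspace M A" "A \<in> carrier_mat n n" "M \<in> carrier_mat q n"
  shows "x \<in> carrier_vec n" "(M * A ^\<^sub>m j) *\<^sub>v x = 0\<^sub>v q"
    "mat_poly_eval (alpha_plus A) (map_mat complex_of_real A) *\<^sub>v map_vec complex_of_real x = 0\<^sub>v n"
  using assms mult_pow_mat_vec_eq_zero[of A n x M q]
  by (auto simp: undetectable_subspace_def)

lemma unobs_subspaceD:
  assumes "x \<in> unobs_subspace H A" "A \<in> carrier_mat n n" "H \<in> carrier_mat p n"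
  shows "x \<in> carrier_vec n" "(H * A ^\<^sub>m j) *\<^sub>v x = 0\<^sub>v p"
  using assms mult_pow_mat_vec_eq_zero[of A n x H p]
  by (auto simp: unobs_subspace_def)

lemma mult_mat_vec_zero: "M \<in> carrier_mat q n \<Longrightarrow> M *\<^sub>v 0\<^sub>v n = (0\<^sub>v q :: 'a::semiring_0 vec)"
  by (intro eq_vecI) auto

lemma zero_vec_mem_undetectable_subspace:
  assumes A: "A \<in> carrier_mat n n" and M: "M \<in> carrier_mat q n"
  shows "0\<^sub>v n \<in> undetectable_subspace M A"
  using A M carrier_mat_poly_eval[of "map_mat complex_of_real A" n "alpha_plus A"]
  by (auto simp: undetectable_subspace_def mult_mat_vec_zero of_real_hom.vec_hom_zero)

lemma zero_vec_mem_unobs_subspace: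
  "A \<in> carrier_mat n n \<Longrightarrow> H \<in> carrier_mat p n \<Longrightarrow> 0\<^sub>v n \<in> unobs_subspace H A"
  by (auto simp: unobs_subspace_def mult_mat_vec_zero)

lemma dim_col_diag_block_mat:
  "\<forall>M\<in>set Ms. dim_col M = n \<Longrightarrow> dim_col (diag_block_mat Ms) = length Ms * n"
  by (induction Ms) (auto simp: Let_def)

lemma diag_block_mat_mult_vec_eq_zero:
  fixes Cs :: "'a::comm_ring_1 mat list"
  assumes "\<forall>M\<in>set Cs. dim_col M = n" and "w \<in> carrier_vec (length Cs * n)"
    and "\<And>k. k < length Cs \<Longrightarrow> Cs ! k *\<^sub>v vec n (\<lambda>c. w $ (k * n + c)) = 0\<^sub>v (dim_row (Cs ! k))"
  shows "diag_block_mat Cs *\<^sub>v w = 0\<^sub>v (dim_row (diag_block_mat Cs))"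
  using assms
proof (induction Cs arbitrary: w)
  case Nil
  then show ?case by (intro eq_vecI) auto
next
  case (Cons M Ms w)
  define B where "B = diag_block_mat Ms"
  have B: "B \<in> carrier_mat (dim_row B) (length Ms * n)"
    using dim_col_diag_block_mat[of Ms n] Cons.prems(1) by (auto simp: B_def)
  have M: "M \<in> carrier_mat (dim_row M) n" using Cons.prems(1) by auto
  define w1 w2 where "w1 = vec_first w n" and "w2 = vec_last w (length Ms * n)"
  have w: "w = w1 @\<^sub>v w2" and w1: "w1 \<in> carrier_vec n" and w2: "w2 \<in> carrier_vec (length Ms * n)"
    using Cons.prems(2) by (auto simp: w1_def w2_def)
  have M_w1: "M *\<^sub>v w1 = 0\<^sub>v (dim_row M)"
    using Cons.prems(3)[of 0] by (simp add: w1_def vec_first_def)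
  have B_w2: "B *\<^sub>v w2 = 0\<^sub>v (dim_row B)"
    unfolding B_def
  proof (rule Cons.IH)
    show "\<forall>M\<in>set Ms. dim_col M = n" using Cons.prems(1) by simp
    show "w2 \<in> carrier_vec (length Ms * n)" by (rule w2)
    fix k assume k: "k < length Ms"
    have block: "vec n (\<lambda>c. w2 $ (k * n + c)) = vec n (\<lambda>c. w $ (Suc k * n + c))"
      using k Cons.prems(2) by (intro eq_vecI) (simp_all add: w2_def vec_last_def mult_add_less_mult, simp only: add.assoc)
    from k have "Suc k < length (M # Ms)" by simp
    from Cons.prems(3)[OF this] show "Ms ! k *\<^sub>v vec n (\<lambda>c. w2 $ (k * n + c)) = 0\<^sub>v (dim_row (Ms ! k))"
      unfolding block nth_Cons_Suc .
  qed
  have "dim_col B = length Ms * n" "dim_col M = n" using B M by auto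
  then have D: "diag_block_mat (M # Ms)
      = four_block_mat M (0\<^sub>m (dim_row M) (length Ms * n)) (0\<^sub>m (dim_row B) n) B"
    unfolding diag_block_mat.simps Let_def B_def[symmetric] by simp
  have "diag_block_mat (M # Ms) *\<^sub>v w = (M *\<^sub>v w1 + 0\<^sub>m (dim_row M) (length Ms * n) *\<^sub>v w2)
      @\<^sub>v (0\<^sub>m (dim_row B) n *\<^sub>v w1 + B *\<^sub>v w2)"
    unfolding D by (subst w, rule four_block_mat_mult_vec[OF M _ _ B w1 w2]) auto
  also have "\<dots> = 0\<^sub>v (dim_row M) @\<^sub>v 0\<^sub>v (dim_row B)"
    unfolding M_w1 B_w2 using w1 w2 by (intro arg_cong2[where f = append_vec]) auto
  also have "\<dots> = 0\<^sub>v (dim_row M + dim_row B)" by auto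
  also have "dim_row M + dim_row B = dim_row (diag_block_mat (M # Ms))" unfolding D by simp
  finally show ?case .
qed

subsection \<open>Laplacians of directed graphs\<close>

lemma sum_atLeastLessThan_if_mem:
  "T \<subseteq> {..<N::nat} \<Longrightarrow> (\<Sum>b\<in>{0..<N}. if b \<in> T then f b else 0) = (\<Sum>b\<in>T. f b)"
proof -
  assume "T \<subseteq> {..<N}"
  then have "{0..<N} \<inter> T = T" by (auto simp: subset_iff)
  then show ?thesis using sum.inter_restrict[of "{0..<N}" f T] by simp
qed

lemma principal_submatrix_left_kernel:
  fixes L :: "'a::idom mat"
  assumes L: "L \<in> carrier_mat N N" and T: "T \<subseteq> {..<N}"
    and u: "u \<in> carrier_vec N" "u \<noteq> 0\<^sub>v N" "\<And>k. k < N \<Longrightarrow> k \<notin> T \<Longrightarrow> u $ k = 0"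
    and Lu: "\<And>a. a \<in> T \<Longrightarrow> (\<Sum>b\<in>T. L $$ (a, b) * u $ b) = 0"
  obtains w where "w \<in> carrier_vec N" "w \<noteq> 0\<^sub>v N" "\<And>k. k < N \<Longrightarrow> k \<notin> T \<Longrightarrow> w $ k = 0"
    "\<And>b. b \<in> T \<Longrightarrow> (\<Sum>a\<in>T. L $$ (a, b) * w $ a) = 0"
proof -
  txt \<open>P agrees with L on T \<times> T and with the identity elsewhere, so its kernel vectors and
    those of its transpose are exactly the ones asked for, extended by zero.\<close>
  define P where
    "P = mat N N (\<lambda>(a, b). if a \<in> T \<and> b \<in> T then L $$ (a, b) else if a = b then 1 else 0)"
  have P: "P \<in> carrier_mat N N" by (simp add: P_def)
  have "P *\<^sub>v u = 0\<^sub>v N"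
  proof (rule eq_vecI)
    fix a assume "a < dim_vec (0\<^sub>v N :: 'a vec)"
    then have a: "a < N" by simp
    have "(P *\<^sub>v u) $ a = (\<Sum>b\<in>{0..<N}. P $$ (a, b) * u $ b)"
      using P u a by (simp add: scalar_prod_def)
    also have "\<dots> = (if a \<in> T then (\<Sum>b\<in>T. L $$ (a, b) * u $ b) else u $ a)"
    proof (cases "a \<in> T")
      case True
      then have "(\<Sum>b\<in>{0..<N}. P $$ (a, b) * u $ b) = (\<Sum>b\<in>{0..<N}. if b \<in> T then L $$ (a, b) * u $ b else 0)"
        using a by (intro sum.cong) (auto simp: P_def)
      with True T show ?thesis by (simp add: sum_atLeastLessThan_if_mem)
    next
      case False
      then have "(\<Sum>b\<in>{0..<N}. P $$ (a, b) * u $ b) = (\<Sum>b\<in>{0..<N}. if b = a then u $ b else 0)"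
        using a by (intro sum.cong) (auto simp: P_def)
      with False a show ?thesis by simp
    qed
    also have "\<dots> = 0" using Lu u(3) a by simp
    finally show "(P *\<^sub>v u) $ a = 0\<^sub>v N $ a" using a by simp
  qed (use P in simp)
  then obtain w where w: "w \<in> carrier_vec N" "w \<noteq> 0\<^sub>v N" "transpose_mat P *\<^sub>v w = 0\<^sub>v N"
    using transpose_kernel_nonzero[OF P u(1,2)] by blast
  have col: "(\<Sum>a\<in>{0..<N}. P $$ (a, b) * w $ a) = 0" if b: "b < N" for b
  proof -
    have "(transpose_mat P *\<^sub>v w) $ b = 0" using w(3) b by simp
    then show ?thesis using P w(1) b by (simp add: scalar_prod_def mult.commute)
  qed
  show thesis
  proof (rule that[OF w(1,2)])
    fix k assume k: "k < N" "k \<notin> T"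
    have "(\<Sum>a\<in>{0..<N}. P $$ (a, k) * w $ a) = (\<Sum>a\<in>{0..<N}. if a = k then w $ a else 0)"
      using k by (intro sum.cong) (auto simp: P_def)
    then show "w $ k = 0" using col[of k] k by simp
  next
    fix b assume b: "b \<in> T"
    then have "(\<Sum>a\<in>{0..<N}. P $$ (a, b) * w $ a) = (\<Sum>a\<in>{0..<N}. if a \<in> T then L $$ (a, b) * w $ a else 0)"
      using T by (intro sum.cong) (auto simp: P_def)
    then show "(\<Sum>a\<in>T. L $$ (a, b) * w $ a) = 0"
      using col[of b] b T by (auto simp: sum_atLeastLessThan_if_mem)
  qed
qed

lemma carrier_laplacian [simp]: "laplacian N E \<in> carrier_mat N N"
  by (simp add: laplacian_def)

lemma dim_laplacian [simp]: "dim_row (laplacian N E) = N" "dim_col (laplacian N E) = N"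
  by (simp_all add: laplacian_def)

lemma laplacian_off_diagonal_eq_zero:
  "a < N \<Longrightarrow> b < N \<Longrightarrow> a \<noteq> b \<Longrightarrow> (b, a) \<notin> E \<Longrightarrow> laplacian N E $$ (a, b) = 0"
  by (simp add: laplacian_def)

lemma laplacian_row_sum_eq_zero:
  assumes T: "T \<subseteq> {..<N}" and a: "a \<in> T" and in_closed: "\<And>j. (j, a) \<in> E \<Longrightarrow> j \<in> T"
  shows "(\<Sum>b\<in>T. laplacian N E $$ (a, b)) = 0"
proof -
  have fin: "finite T" using T finite_subset by blast
  have "(\<Sum>b\<in>T. laplacian N E $$ (a, b))
      = (\<Sum>b\<in>T. (if b = a then real (in_degree E a) else 0) - (if (b, a) \<in> E then 1 else 0))"
    using T a by (intro sum.cong) (auto simp: laplacian_def subset_iff)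
  also have "\<dots> = (\<Sum>b\<in>T. if b = a then real (in_degree E a) else 0) - (\<Sum>b\<in>T. if (b, a) \<in> E then 1 else 0)"
    by (rule sum_subtractf)
  also have "\<dots> = real (in_degree E a) - real (card {b \<in> T. (b, a) \<in> E})"
    using fin a by (simp add: sum.If_cases Int_def)
  also have "{b \<in> T. (b, a) \<in> E} = {j. (j, a) \<in> E}" using in_closed by auto
  finally show ?thesis by (simp add: in_degree_def)
qed

lemma laplacian_left_kernel_in_closed:
  assumes T: "T \<subseteq> {..<N}" "T \<noteq> {}"
    and in_closed: "\<And>a j. a \<in> T \<Longrightarrow> (j, a) \<in> E \<Longrightarrow> j \<in> T"
  obtains w where "w \<in> carrier_vec N" "w \<noteq> 0\<^sub>v N" "\<And>k. k < N \<Longrightarrow> k \<notin> T \<Longrightarrow> w $ k = 0"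
    "\<And>b. b \<in> T \<Longrightarrow> (\<Sum>a\<in>T. laplacian N E $$ (a, b) * w $ a) = 0"
proof -
  define u :: "real vec" where "u = vec N (\<lambda>k. if k \<in> T then 1 else 0)"
  obtain t where t: "t \<in> T" "t < N" using T by blast
  then have "u $ t \<noteq> 0\<^sub>v N $ t" by (simp add: u_def)
  then have "u \<noteq> 0\<^sub>v N" by metis
  then have u: "u \<in> carrier_vec N" "u \<noteq> 0\<^sub>v N" "\<And>k. k < N \<Longrightarrow> k \<notin> T \<Longrightarrow> u $ k = 0"
    by (auto simp: u_def)
  have Lu: "(\<Sum>b\<in>T. laplacian N E $$ (a, b) * u $ b) = 0" if a: "a \<in> T" for a
  proof -
    have "(\<Sum>b\<in>T. laplacian N E $$ (a, b) * u $ b) = (\<Sum>b\<in>T. laplacian N E $$ (a, b))"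
      using T(1) by (intro sum.cong) (auto simp: u_def subset_iff)
    then show ?thesis using laplacian_row_sum_eq_zero[OF T(1) a] in_closed a by simp
  qed
  show thesis
    using u Lu that by (rule principal_submatrix_left_kernel[OF carrier_laplacian T(1)])
qed

lemma laplacian_kernel_out_closed:
  assumes R: "R \<subseteq> {..<N}" and out_closed: "\<And>k j. k \<in> R \<Longrightarrow> (k, j) \<in> E \<Longrightarrow> j \<in> R"
    and w: "w \<in> carrier_vec N" "w \<noteq> 0\<^sub>v N" "\<And>k. k < N \<Longrightarrow> k \<notin> R \<Longrightarrow> w $ k = 0"
    and left_kernel: "\<And>b. b \<in> R \<Longrightarrow> (\<Sum>a\<in>R. laplacian N E $$ (a, b) * w $ a) = 0"
  obtains v where "v \<in> carrier_vec N" "v \<noteq> 0\<^sub>v N" "laplacian N E *\<^sub>v v = 0\<^sub>v N"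
    "\<And>k. k < N \<Longrightarrow> k \<notin> R \<Longrightarrow> v $ k = 0"
proof -
  let ?L = "laplacian N E"
  have wL: "(\<Sum>b\<in>R. transpose_mat ?L $$ (a, b) * w $ b) = 0" if a: "a \<in> R" for a
  proof -
    have "(\<Sum>b\<in>R. transpose_mat ?L $$ (a, b) * w $ b) = (\<Sum>b\<in>R. ?L $$ (b, a) * w $ b)"
      using R a by (intro sum.cong) (auto simp: subset_iff)
    then show ?thesis using left_kernel[OF a] by simp
  qed
  obtain v where v: "v \<in> carrier_vec N" "v \<noteq> 0\<^sub>v N" "\<And>k. k < N \<Longrightarrow> k \<notin> R \<Longrightarrow> v $ k = 0"
    and rows: "\<And>b. b \<in> R \<Longrightarrow> (\<Sum>a\<in>R. transpose_mat ?L $$ (a, b) * v $ a) = 0"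
    using principal_submatrix_left_kernel[OF transpose_carrier_mat[THEN iffD2, OF carrier_laplacian] R w wL]
    by blast
  have Lv: "?L *\<^sub>v v = 0\<^sub>v N"
  proof (rule eq_vecI)
    fix a assume "a < dim_vec (0\<^sub>v N :: real vec)"
    then have a: "a < N" by simp
    have "(?L *\<^sub>v v) $ a = (\<Sum>b\<in>{0..<N}. ?L $$ (a, b) * v $ b)"
      using v(1) a by (simp add: scalar_prod_def)
    also have "\<dots> = (\<Sum>b\<in>{0..<N}. if b \<in> R then ?L $$ (a, b) * v $ b else 0)"
      using v(3) by (intro sum.cong) auto
    also have "\<dots> = (\<Sum>b\<in>R. ?L $$ (a, b) * v $ b)"
      by (rule sum_atLeastLessThan_if_mem[OF R])
    also have "\<dots> = 0"
    proof (cases "a \<in> R")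
      case True
      have "(\<Sum>b\<in>R. ?L $$ (a, b) * v $ b) = (\<Sum>b\<in>R. transpose_mat ?L $$ (b, a) * v $ b)"
        using R a by (intro sum.cong) (auto simp: subset_iff)
      then show ?thesis using rows[OF True] by simp
    next
      case False
      then have "?L $$ (a, b) = 0" if "b \<in> R" for b
        using that R a out_closed by (intro laplacian_off_diagonal_eq_zero) (auto simp: subset_iff)
      then show ?thesis by simp
    qed
    finally show "(?L *\<^sub>v v) $ a = 0\<^sub>v N $ a" using a by simp
  qed (use v in simp)
  show thesis by (rule that[OF v(1,2) Lv v(3)])
qed

lemma is_reachE:
  assumes E: "E \<subseteq> {..<N} \<times> {..<N}" and reach: "is_reach N E R"
  obtains r where "r < N" "R = reachable_set E r" "R \<subseteq> {..<N}" "\<And>j. (j, r) \<in> E\<^sup>* \<Longrightarrow> j \<in> R"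
proof -
  obtain r where r: "r < N" and R: "R = reachable_set E r"
    and max: "\<not> (\<exists>j<N. j \<noteq> r \<and> reachable_set E r \<subset> reachable_set E j)"
    using reach by (auto simp: is_reach_def)
  have R_sub: "R \<subseteq> {..<N}"
  proof
    fix k assume "k \<in> R"
    then have "(r, k) \<in> E\<^sup>*" by (simp add: R reachable_set_def)
    then show "k \<in> {..<N}" using r E by (induction rule: rtrancl_induct) auto
  qed
  have ancestors: "j \<in> R" if j: "(j, r) \<in> E\<^sup>*" for j
  proof (rule ccontr)
    assume "j \<notin> R"
    then have "j \<noteq> r" by (auto simp: R reachable_set_def)
    then obtain j' where "(j, j') \<in> E" using j by (metis converse_rtranclE)
    then have "j < N" using E by auto
    have "reachable_set E r \<subseteq> reachable_set E j"
      using j by (auto simp: reachable_set_def intro: rtrancl_trans)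
    moreover have "j \<in> reachable_set E j" by (simp add: reachable_set_def)
    ultimately have "reachable_set E r \<subset> reachable_set E j" using \<open>j \<notin> R\<close> R by auto
    then show False using max \<open>j \<noteq> r\<close> \<open>j < N\<close> by blast
  qed
  show thesis by (rule that[OF r R R_sub ancestors])
qed

lemma laplacian_kernel_on_reach:
  assumes E: "E \<subseteq> {..<N} \<times> {..<N}" and reach: "is_reach N E R"
  obtains v where "v \<in> carrier_vec N" "v \<noteq> 0\<^sub>v N" "laplacian N E *\<^sub>v v = 0\<^sub>v N"
    "\<And>k. k < N \<Longrightarrow> k \<notin> R \<Longrightarrow> v $ k = 0"
proof -
  obtain r where r: "r < N" and R: "R = reachable_set E r" "R \<subseteq> {..<N}"
    and ancestors: "\<And>j. (j, r) \<in> E\<^sup>* \<Longrightarrow> j \<in> R"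
    using is_reachE[OF E reach] by blast
  define S where "S = {k. (k, r) \<in> E\<^sup>*}"
  have S: "S \<subseteq> R" "S \<subseteq> {..<N}" "S \<noteq> {}"
    using ancestors R(2) by (auto simp: S_def)
  have S_in_closed: "j \<in> S" if "a \<in> S" "(j, a) \<in> E" for a j
    using that converse_rtrancl_into_rtrancl[of j a E r] by (simp add: S_def)
  have R_out_closed: "j \<in> R" if "k \<in> R" "(k, j) \<in> E" for k j
    using that rtrancl_into_rtrancl[of r k E j] by (simp add: R(1) reachable_set_def)
  show thesis
  proof (rule laplacian_left_kernel_in_closed[OF S(2,3) S_in_closed])
    fix w assume w: "w \<in> carrier_vec N" "w \<noteq> 0\<^sub>v N" "\<And>k. k < N \<Longrightarrow> k \<notin> S \<Longrightarrow> w $ k = 0"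
      and left_kernel_S: "\<And>b. b \<in> S \<Longrightarrow> (\<Sum>a\<in>S. laplacian N E $$ (a, b) * w $ a) = 0"
    have left_kernel_R: "(\<Sum>a\<in>R. laplacian N E $$ (a, b) * w $ a) = 0" if b: "b \<in> R" for b
    proof -
      have "(\<Sum>a\<in>R. laplacian N E $$ (a, b) * w $ a) = (\<Sum>a\<in>S. laplacian N E $$ (a, b) * w $ a)"
        using S R(2) w(3) finite_subset[OF R(2)] by (intro sum.mono_neutral_right) (auto simp: subset_iff)
      also have "\<dots> = 0"
      proof (cases "b \<in> S")
        case False
        then have "laplacian N E $$ (a, b) = 0" if "a \<in> S" for a
          using that b R(2) S(2) S_in_closed by (intro laplacian_off_diagonal_eq_zero) (auto simp: subset_iff)
        then show ?thesis by simp
      qed (rule left_kernel_S)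
      finally show ?thesis .
    qed
    have w_R: "w $ k = 0" if "k < N" "k \<notin> R" for k using that w(3) S(1) by blast
    show thesis
      by (rule laplacian_kernel_out_closed[OF R(2) R_out_closed w(1,2) w_R left_kernel_R that])
  qed
qed

subsection \<open>Lifting undetectable vectors to the network\<close>

lemma kron_one_pow_mult_kron_vec:
  fixes A :: "'a::comm_semiring_1 mat"
  assumes A: "A \<in> carrier_mat n n" and v: "v \<in> carrier_vec N"
  shows "x \<in> carrier_vec n \<Longrightarrow> kron_mat (1\<^sub>m N) A ^\<^sub>m j *\<^sub>v kron_vec v x = kron_vec v (A ^\<^sub>m j *\<^sub>v x)"
proof (induction j arbitrary: x)
  case 0
  then show ?case using v by (simp add: carrier_matD[OF A])
next
  case (Suc j)
  have F: "kron_mat (1\<^sub>m N) A \<in> carrier_mat (N * n) (N * n)" using A by simp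
  have "kron_mat (1\<^sub>m N) A ^\<^sub>m Suc j *\<^sub>v kron_vec v x
      = kron_mat (1\<^sub>m N) A ^\<^sub>m j *\<^sub>v (kron_mat (1\<^sub>m N) A *\<^sub>v kron_vec v x)"
    using assoc_mult_mat_vec[OF pow_carrier_mat[OF F] F carrier_kron_vec[OF v Suc.prems]] by simp
  also have "kron_mat (1\<^sub>m N) A *\<^sub>v kron_vec v x = kron_vec v (A *\<^sub>v x)"
    using kron_mat_mult_kron_vec[OF one_carrier_mat A v Suc.prems] v by simp
  also have "kron_mat (1\<^sub>m N) A ^\<^sub>m j *\<^sub>v kron_vec v (A *\<^sub>v x) = kron_vec v (A ^\<^sub>m j *\<^sub>v (A *\<^sub>v x))"
    using A Suc.prems by (intro Suc.IH) simp
  also have "A ^\<^sub>m j *\<^sub>v (A *\<^sub>v x) = A ^\<^sub>m Suc j *\<^sub>v x"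
    using assoc_mult_mat_vec[OF pow_carrier_mat[OF A] A Suc.prems, of j] by simp
  finally show ?case .
qed

lemma networked_output_eq_zero:
  fixes A H :: "real mat" and C :: "nat \<Rightarrow> real mat"
  assumes A: "A \<in> carrier_mat n n" and C: "\<forall>i<N. C i \<in> carrier_mat (m i) n"
    and H: "H \<in> carrier_mat p n" and v: "v \<in> carrier_vec N" and x: "x \<in> carrier_vec n"
    and local_output: "\<And>k. k < N \<Longrightarrow> v $ k \<noteq> 0 \<Longrightarrow> (C k * A ^\<^sub>m j) *\<^sub>v x = 0\<^sub>v (m k)"
    and coupling: "laplacian N E *\<^sub>v v = 0\<^sub>v N \<or> (H * A ^\<^sub>m j) *\<^sub>v x = 0\<^sub>v p"
  defines "G \<equiv> diag_block_mat (map C [0..<N]) @\<^sub>r kron_mat (laplacian N E) H"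
  shows "(G * kron_mat (1\<^sub>m N) A ^\<^sub>m j) *\<^sub>v kron_vec v x = 0\<^sub>v (dim_row G)"
proof -
  define D where "D = diag_block_mat (map C [0..<N])"
  define K where "K = kron_mat (laplacian N E) H"
  define y where "y = A ^\<^sub>m j *\<^sub>v x"
  have y: "y \<in> carrier_vec n" using mult_mat_vec_carrier[OF pow_carrier_mat[OF A] x] by (simp add: y_def)
  have cols: "\<forall>M\<in>set (map C [0..<N]). dim_col M = n" using C by auto
  have D: "D \<in> carrier_mat (dim_row D) (N * n)"
    using dim_col_diag_block_mat[OF cols] by (intro carrier_matI) (simp_all add: D_def)
  have K: "K \<in> carrier_mat (N * p) (N * n)" using H by (simp add: K_def)
  have F: "kron_mat (1\<^sub>m N) A \<in> carrier_mat (N * n) (N * n)" using A by simp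
  have "(G * kron_mat (1\<^sub>m N) A ^\<^sub>m j) *\<^sub>v kron_vec v x = G *\<^sub>v kron_vec v y"
    unfolding G_def D_def[symmetric] K_def[symmetric] y_def
    using assoc_mult_mat_vec[OF carrier_append_rows[OF D K] pow_carrier_mat[OF F] carrier_kron_vec[OF v x]]
      kron_one_pow_mult_kron_vec[OF A v x] by simp
  also have "\<dots> = D *\<^sub>v kron_vec v y @\<^sub>v K *\<^sub>v kron_vec v y"
    unfolding G_def D_def[symmetric] K_def[symmetric] by (rule mat_mult_append[OF D K carrier_kron_vec[OF v y]])
  also have "D *\<^sub>v kron_vec v y = 0\<^sub>v (dim_row D)"
    unfolding D_def
  proof (rule diag_block_mat_mult_vec_eq_zero)
    fix k assume "k < length (map C [0..<N])"
    then have k: "k < N" by simp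
    have Ck: "C k \<in> carrier_mat (m k) n" using C k by simp
    have "vec n (\<lambda>c. kron_vec v y $ (k * n + c)) = v $ k \<cdot>\<^sub>v y"
      using v y k by (intro eq_vecI) (simp_all add: index_kron_vec_block)
    moreover have "C k *\<^sub>v (v $ k \<cdot>\<^sub>v y) = v $ k \<cdot>\<^sub>v (C k *\<^sub>v y)"
      by (rule mult_mat_vec[OF Ck y])
    moreover have "v $ k \<cdot>\<^sub>v (C k *\<^sub>v y) = 0\<^sub>v (m k)"
    proof (cases "v $ k = 0")
      case False
      then have "C k *\<^sub>v y = 0\<^sub>v (m k)"
        using local_output[OF k] assoc_mult_mat_vec[OF Ck pow_carrier_mat[OF A] x] by (simp add: y_def)
      then show ?thesis by (intro eq_vecI) auto
    qed (use Ck in \<open>intro eq_vecI, auto\<close>)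
    ultimately show "map C [0..<N] ! k *\<^sub>v vec n (\<lambda>c. kron_vec v y $ (k * n + c))
        = 0\<^sub>v (dim_row (map C [0..<N] ! k))"
      using k Ck by simp
  qed (use C v y in auto)
  also have "K *\<^sub>v kron_vec v y = 0\<^sub>v (N * p)"
  proof -
    have "K *\<^sub>v kron_vec v y = kron_vec (laplacian N E *\<^sub>v v) (H *\<^sub>v y)"
      unfolding K_def by (rule kron_mat_mult_kron_vec[OF carrier_laplacian H v y])
    moreover have "H *\<^sub>v y = (H * A ^\<^sub>m j) *\<^sub>v x"
      using assoc_mult_mat_vec[OF H pow_carrier_mat[OF A] x] by (simp add: y_def)
    ultimately show ?thesis
      using coupling kron_vec_eq_zero_iff[OF mult_mat_vec_carrier[OF carrier_laplacian v]
        mult_mat_vec_carrier[OF H y]] by auto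
  qed
  also have "0\<^sub>v (dim_row D) @\<^sub>v 0\<^sub>v (N * p) = (0\<^sub>v (dim_row D + N * p) :: real vec)" by auto
  also have "dim_row D + N * p = dim_row G"
    using K by (simp add: G_def D_def[symmetric] K_def[symmetric] append_rows_def)
  finally show ?thesis .
qed

lemma alpha_plus_kron_one_mult_kron_vec:
  fixes A :: "real mat"
  assumes A: "A \<in> carrier_mat n n" and N: "N > 0" and v: "v \<in> carrier_vec N" and x: "x \<in> carrier_vec n"
    and Px: "mat_poly_eval (alpha_plus A) (map_mat complex_of_real A) *\<^sub>v map_vec complex_of_real x = 0\<^sub>v n"
  shows "mat_poly_eval (alpha_plus (kron_mat (1\<^sub>m N) A)) (map_mat complex_of_real (kron_mat (1\<^sub>m N) A))
      *\<^sub>v map_vec complex_of_real (kron_vec v x) = 0\<^sub>v (N * n)"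
proof -
  let ?A = "map_mat complex_of_real A" and ?v = "map_vec complex_of_real v"
    and ?x = "map_vec complex_of_real x"
  define P where "P = mat_poly_eval (alpha_plus A) ?A"
  have P: "P \<in> carrier_mat n n" using A by (simp add: P_def carrier_mat_poly_eval)
  have "map_mat complex_of_real (1\<^sub>m N) = 1\<^sub>m N" by (intro eq_matI) auto
  then have "map_mat complex_of_real (kron_mat (1\<^sub>m N) A) = kron_mat (1\<^sub>m N) ?A"
    by (simp add: map_mat_kron_mat)
  then have "mat_poly_eval (alpha_plus (kron_mat (1\<^sub>m N) A)) (map_mat complex_of_real (kron_mat (1\<^sub>m N) A))
      = kron_mat (1\<^sub>m N) P"
    using A by (simp add: alpha_plus_kron_one[OF A N] mat_poly_eval_kron_one P_def)
  moreover have vx: "?v \<in> carrier_vec N" "?x \<in> carrier_vec n" using v x by simp_all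
  then have "kron_mat (1\<^sub>m N) P *\<^sub>v kron_vec ?v ?x = kron_vec ?v (P *\<^sub>v ?x)"
    using kron_mat_mult_kron_vec[OF one_carrier_mat P vx] by simp
  ultimately show ?thesis
    using Px v x kron_vec_eq_zero_iff[of ?v N "0\<^sub>v n" n] by (simp add: map_vec_kron_vec P_def)
qed

lemma kron_vec_mem_undetectable_subspace:
  fixes A H :: "real mat" and C :: "nat \<Rightarrow> real mat"
  assumes A: "A \<in> carrier_mat n n" and C: "\<forall>i<N. C i \<in> carrier_mat (m i) n"
    and H: "H \<in> carrier_mat p n" and v: "v \<in> carrier_vec N" "v \<noteq> 0\<^sub>v N"
    and undetectable: "\<And>k. k < N \<Longrightarrow> v $ k \<noteq> 0 \<Longrightarrow> x \<in> undetectable_subspace (C k) A"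
    and coupling: "laplacian N E *\<^sub>v v = 0\<^sub>v N \<or> x \<in> unobs_subspace H A"
  shows "kron_vec v x \<in> undetectable_subspace
    (diag_block_mat (map C [0..<N]) @\<^sub>r kron_mat (laplacian N E) H) (kron_mat (1\<^sub>m N) A)"
proof -
  obtain k where k: "k < N" "v $ k \<noteq> 0" using nonzero_vec_index[OF v] by blast
  then have "C k \<in> carrier_mat (m k) n" using C by simp
  note x = undetectable_subspaceD[OF undetectable[OF k] A this]
  have "((diag_block_mat (map C [0..<N]) @\<^sub>r kron_mat (laplacian N E) H) * kron_mat (1\<^sub>m N) A ^\<^sub>m j)
      *\<^sub>v kron_vec v x = 0\<^sub>v (dim_row (diag_block_mat (map C [0..<N]) @\<^sub>r kron_mat (laplacian N E) H))" for j
  proof (rule networked_output_eq_zero[OF A C H v(1) x(1)])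
    fix k' assume "k' < N" "v $ k' \<noteq> 0"
    then show "(C k' * A ^\<^sub>m j) *\<^sub>v x = 0\<^sub>v (m k')"
      using undetectable C A by (blast intro: undetectable_subspaceD(2))
  next
    show "laplacian N E *\<^sub>v v = 0\<^sub>v N \<or> (H * A ^\<^sub>m j) *\<^sub>v x = 0\<^sub>v p"
      using coupling unobs_subspaceD(2)[OF _ A H] by blast
  qed
  moreover have "N > 0" using k by simp
  ultimately show ?thesis
    using A v x alpha_plus_kron_one_mult_kron_vec by (simp add: undetectable_subspace_def)
qed

lemma detectable_networked_imp_eq_zero:
  fixes A H :: "real mat" and C :: "nat \<Rightarrow> real mat"
  assumes A: "A \<in> carrier_mat n n" and C: "\<forall>i<N. C i \<in> carrier_mat (m i) n"
    and H: "H \<in> carrier_mat p n"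
    and det: "detectable (diag_block_mat (map C [0..<N]) @\<^sub>r kron_mat (laplacian N E) H) (kron_mat (1\<^sub>m N) A)"
    and v: "v \<in> carrier_vec N" "v \<noteq> 0\<^sub>v N"
    and undetectable: "\<And>k. k < N \<Longrightarrow> v $ k \<noteq> 0 \<Longrightarrow> x \<in> undetectable_subspace (C k) A"
    and coupling: "laplacian N E *\<^sub>v v = 0\<^sub>v N \<or> x \<in> unobs_subspace H A"
  shows "x = 0\<^sub>v n"
proof -
  obtain k where k: "k < N" "v $ k \<noteq> 0" using nonzero_vec_index[OF v] by blast
  then have x: "x \<in> carrier_vec n" using undetectable C A by (blast intro: undetectable_subspaceD(1))
  have "kron_vec v x = 0\<^sub>v (N * n)"
    using kron_vec_mem_undetectable_subspace[OF A C H v undetectable coupling] det A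
    by (simp add: detectable_def)
  then show ?thesis using kron_vec_eq_zero_iff[OF v(1) x] v(2) by simp
qed

theorem theorem3:
  fixes N n p :: nat and m :: "nat \<Rightarrow> nat"
    and A H :: "real mat" and C :: "nat \<Rightarrow> real mat"
    and E :: "(nat \<times> nat) set" and R :: "nat set"
  assumes A: "A \<in> carrier_mat n n"
    and C: "\<forall>i<N. C i \<in> carrier_mat (m i) n"
    and H: "H \<in> carrier_mat p n"
    and E_nodes: "E \<subseteq> {..<N} \<times> {..<N}"
    and no_loops: "\<forall>i. (i, i) \<notin> E"
    and det: "detectable
               (diag_block_mat (map C [0..<N]) @\<^sub>r kron_mat (laplacian N E) H)
               (kron_mat (1\<^sub>m N) A)"
    and reach: "is_reach N E R"
  shows "(\<Inter>i\<in>R. undetectable_subspace (C i) A) = {0\<^sub>v n} \<and>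
         (\<forall>i\<in>R. unobs_subspace H A \<inter> undetectable_subspace (C i) A = {0\<^sub>v n})"
proof -
  have R: "R \<subseteq> {..<N}" using is_reachE[OF E_nodes reach] by blast
  then have zero: "0\<^sub>v n \<in> undetectable_subspace (C i) A" if "i \<in> R" for i
    using that C zero_vec_mem_undetectable_subspace[OF A] by blast
  obtain v where v: "v \<in> carrier_vec N" "v \<noteq> 0\<^sub>v N" and Lv: "laplacian N E *\<^sub>v v = 0\<^sub>v N"
    and supp: "\<And>k. k < N \<Longrightarrow> k \<notin> R \<Longrightarrow> v $ k = 0"
    using laplacian_kernel_on_reach[OF E_nodes reach] by blast
  have "x = 0\<^sub>v n" if "x \<in> (\<Inter>i\<in>R. undetectable_subspace (C i) A)" for x
    using that supp Lv by (intro detectable_networked_imp_eq_zero[OF A C H det v]) auto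
  moreover have "x = 0\<^sub>v n"
    if i: "i \<in> R" and x: "x \<in> unobs_subspace H A \<inter> undetectable_subspace (C i) A" for i x
  proof (rule detectable_networked_imp_eq_zero[OF A C H det unit_vec_carrier unit_vec_nonzero])
    show "i < N" using i R by auto
    fix k assume "k < N" "unit_vec N i $ k \<noteq> 0"
    then have "k = i" using \<open>i < N\<close> by (simp split: if_splits)
    then show "x \<in> undetectable_subspace (C k) A" using x by simp
  next
    show "laplacian N E *\<^sub>v unit_vec N i = 0\<^sub>v N \<or> x \<in> unobs_subspace H A" using x by simp
  qed
  ultimately show ?thesis
    using zero zero_vec_mem_unobs_subspace[OF A H] by blast
qed

end
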